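(* Let $\Gamma$ be a finitely generated group that contains an infinite acentral subgroup $A$ of infinite index in $\Gamma$. Then $\Gamma$ is not presentable by a product.
   Context: A subgroup $A$ of a group $\Gamma$ is called acentral if for every $g\in A\setminus\{1\}$ the centraliser $C_\Gamma(g)$ is contained in $A$. An infinite group $\Gamma$ is not presentable by a product if for every homomorphism $\varphi\colon \Gamma_1\times\Gamma_2\to\Gamma$ whose image has finite index in $\Gamma$, at least one of the images $\varphi(\Gamma_1)$, $\varphi(\Gamma_2)$ is finite; an infinite group is presentable by a product if it is not "not presentable by a product". *)

theory Defs
  imports "HOL-Algebra.Algebra"
begin

definition centraliser :: "('a, 'm) monoid_scheme \<Rightarrow> 'a \<Rightarrow> 'a set" where
  "centraliser G g = {h \<in> carrier G. h \<otimes>\<^bsub>G\<^esub> g = g \<otimes>\<^bsub>G\<^esub> h}"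

definition acentral :: "('a, 'm) monoid_scheme \<Rightarrow> 'a set \<Rightarrow> bool" where
  "acentral G A \<longleftrightarrow> subgroup A G \<and>
     (\<forall>g \<in> A - {\<one>\<^bsub>G\<^esub>}. centraliser G g \<subseteq> A)"

definition finitely_generated_group :: "('a, 'm) monoid_scheme \<Rightarrow> bool" where
  "finitely_generated_group G \<longleftrightarrow>
     (\<exists>S. finite S \<and> S \<subseteq> carrier G \<and> generate G S = carrier G)"

text \<open>The factor groups range over all groups whose
  elements live in the types 'b and 'c; these types are passed as explicit
  parameters, and in the main theorem they are free (hence universally quantified)
  type variables, so the notion covers groups of every carrier type.\<close>
definition not_presentable_by_product ::
    "'b itself \<Rightarrow> 'c itself \<Rightarrow> ('a, 'm) monoid_scheme \<Rightarrow> bool" where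
  "not_presentable_by_product (_ :: 'b itself) (_ :: 'c itself) G \<longleftrightarrow>
     infinite (carrier G) \<and>
     (\<forall>(G1 :: 'b monoid) (G2 :: 'c monoid) \<phi>.
        group G1 \<longrightarrow> group G2 \<longrightarrow> \<phi> \<in> hom (G1 \<times>\<times> G2) G \<longrightarrow>
        finite (rcosets\<^bsub>G\<^esub> (\<phi> ` carrier (G1 \<times>\<times> G2))) \<longrightarrow>
        finite ((\<lambda>x. \<phi> (x, \<one>\<^bsub>G2\<^esub>)) ` carrier G1) \<or>
        finite ((\<lambda>y. \<phi> (\<one>\<^bsub>G1\<^esub>, y)) ` carrier G2))"

end

theory Submission
  imports Defs
begin

text \<open>Let the image H of \<open>\<phi> : \<Gamma>\<^sub>1 \<times> \<Gamma>\<^sub>2 \<rightarrow> \<Gamma>\<close> have finite index. It is the product PQ of the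
  images P, Q of the two factors, which commute elementwise. Since A is infinite, so is
  \<open>A \<inter> H\<close>; pick \<open>a = pq \<noteq> 1\<close> in it. Both p and q commute with a, hence lie in A by
  acentrality. A nontrivial element of A in one factor drags the other factor into A, and if
  that factor is infinite, one of its nontrivial elements drags the first factor back into A.
  So if P and Q were both infinite, H would lie in A and A would have finite index.\<close>

lemma (in group) finite_index_mono:
  assumes H: "subgroup H G" and K: "subgroup K G" and "H \<subseteq> K"
    and "finite (rcosets H)"
  shows "finite (rcosets K)"
proof -
  have KH: "K <#> H = K"
  proof
    show "K <#> H \<subseteq> K"
      using \<open>H \<subseteq> K\<close> subgroup.m_closed[OF K] unfolding set_mult_def by blast
    show "K \<subseteq> K <#> H"
      using subgroup.one_closed[OF H] K subgroup.mem_carrier unfolding set_mult_def by fastforce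
  qed
  have "rcosets K \<subseteq> (\<lambda>C. K <#> C) ` (rcosets H)"
  proof
    fix C assume "C \<in> rcosets K"
    then obtain x where x: "x \<in> carrier G" and C: "C = K #> x" unfolding RCOSETS_def by blast
    have "C = K <#> (H #> x)"
      using setmult_rcos_assoc[OF subgroup.subset[OF K] subgroup.subset[OF H] x] KH C by simp
    moreover have "H #> x \<in> rcosets H" using x by (rule rcosetsI[OF subgroup.subset[OF H]])
    ultimately show "C \<in> (\<lambda>C. K <#> C) ` (rcosets H)" by blast
  qed
  then show ?thesis using \<open>finite (rcosets H)\<close> finite_surj by blast
qed

lemma (in group) Int_rcos_subset:
  assumes H: "subgroup H G" and A: "subgroup A G" and "a \<in> A"
  shows "A \<inter> (H #> a) \<subseteq> (A \<inter> H) #> a"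
proof
  fix b assume "b \<in> A \<inter> (H #> a)"
  then obtain h where "h \<in> H" "b = h \<otimes> a" "b \<in> A" unfolding r_coset_def by blast
  moreover have "h \<in> carrier G" "a \<in> carrier G"
    using \<open>h \<in> H\<close> \<open>a \<in> A\<close> subgroup.mem_carrier[OF H] subgroup.mem_carrier[OF A] by auto
  then have "h = b \<otimes> inv a" using \<open>b = h \<otimes> a\<close> by (simp add: m_assoc)
  then have "h \<in> A" using \<open>b \<in> A\<close> \<open>a \<in> A\<close> A by (simp add: subgroup.m_closed subgroup.m_inv_closed)
  ultimately show "b \<in> (A \<inter> H) #> a" unfolding r_coset_def by blast
qed

lemma (in group) infinite_Int_finite_index:
  assumes H: "subgroup H G" and A: "subgroup A G"
    and "finite (rcosets H)" and "infinite A"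
  shows "infinite (A \<inter> H)"
proof
  assume "finite (A \<inter> H)"
  have "finite (A \<inter> C)" if "C \<in> rcosets H" for C
  proof (cases "A \<inter> C = {}")
    case False
    then obtain a where "a \<in> A" "a \<in> C" by blast
    obtain x where "x \<in> carrier G" "C = H #> x" using \<open>C \<in> rcosets H\<close> unfolding RCOSETS_def by blast
    then have "C = H #> a" using repr_independence \<open>a \<in> C\<close> H by blast
    then have "A \<inter> C \<subseteq> (A \<inter> H) #> a" using Int_rcos_subset[OF H A \<open>a \<in> A\<close>] by simp
    moreover have "finite ((A \<inter> H) #> a)" using \<open>finite (A \<inter> H)\<close> by (simp add: r_coset_def)
    ultimately show ?thesis by (rule finite_subset)
  qed simp
  then have "finite (\<Union>C\<in>rcosets H. A \<inter> C)" using \<open>finite (rcosets H)\<close> by blast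
  moreover have "A = (\<Union>C\<in>rcosets H. A \<inter> C)"
    using rcosets_part_G[OF H] subgroup.subset[OF A] by blast
  ultimately show False using \<open>infinite A\<close> by simp
qed

lemma (in group) acentral_absorbs_commuting:
  assumes "acentral G A" and "p \<in> A" and "p \<noteq> \<one>"
    and "Q \<subseteq> carrier G" and "\<forall>q\<in>Q. q \<otimes> p = p \<otimes> q"
  shows "Q \<subseteq> A"
  using assms unfolding acentral_def centraliser_def by blast

lemma (in group) acentral_absorbs_commuting_pair:
  assumes "acentral G A" and "P \<subseteq> carrier G" and "Q \<subseteq> carrier G"
    and commute: "\<forall>p\<in>P. \<forall>q\<in>Q. p \<otimes> q = q \<otimes> p"
    and "p \<in> P \<inter> A" and "p \<noteq> \<one>" and "infinite Q"
  shows "P \<subseteq> A \<and> Q \<subseteq> A"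
proof
  show QA: "Q \<subseteq> A"
    using acentral_absorbs_commuting[of A p Q] assms by auto
  obtain q where "q \<in> Q" "q \<noteq> \<one>"
    using \<open>infinite Q\<close> infinite_imp_nonempty[of "Q - {\<one>}"] by auto
  moreover have "\<forall>p'\<in>P. p' \<otimes> q = q \<otimes> p'"
    using commute \<open>q \<in> Q\<close> by blast
  ultimately show "P \<subseteq> A"
    using acentral_absorbs_commuting[of A q P] assms QA by blast
qed

lemma (in group) acentral_contains_commuting_product:
  assumes acentral: "acentral G A" and P: "P \<subseteq> carrier G" and Q: "Q \<subseteq> carrier G"
    and commute: "\<forall>p\<in>P. \<forall>q\<in>Q. p \<otimes> q = q \<otimes> p"
    and "infinite P" and "infinite Q"
    and "a \<in> A \<inter> (P <#> Q)" and "a \<noteq> \<one>"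
  shows "P <#> Q \<subseteq> A"
proof -
  have A: "subgroup A G" using acentral unfolding acentral_def by blast
  obtain p q where pq: "p \<in> P" "q \<in> Q" "a = p \<otimes> q" and "a \<in> A"
    using \<open>a \<in> A \<inter> (P <#> Q)\<close> unfolding set_mult_def by auto
  have pc: "p \<in> carrier G" and qc: "q \<in> carrier G" using pq P Q by auto
  from commute pq(1,2) have pq_comm: "p \<otimes> q = q \<otimes> p" by blast
  have "p \<otimes> a = p \<otimes> (q \<otimes> p)" by (simp add: pq(3) pq_comm)
  also have "\<dots> = a \<otimes> p" using pc qc by (simp add: pq(3) m_assoc)
  finally have p_comm_a: "p \<otimes> a = a \<otimes> p" .
  have "q \<otimes> a = (q \<otimes> p) \<otimes> q" using pc qc by (simp add: pq(3) m_assoc)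
  also have "\<dots> = a \<otimes> q" by (simp add: pq(3) pq_comm)
  finally have q_comm_a: "q \<otimes> a = a \<otimes> q" .
  have "{p, q} \<subseteq> A"
    using acentral_absorbs_commuting[OF acentral \<open>a \<in> A\<close> \<open>a \<noteq> \<one>\<close>, of "{p, q}"]
      p_comm_a q_comm_a pc qc
    by simp
  then have pA: "p \<in> A" and qA: "q \<in> A" by simp_all
  have "P \<subseteq> A \<and> Q \<subseteq> A"
  proof (cases "p = \<one>")
    case True
    then have "q \<noteq> \<one>" using pq(3) qc \<open>a \<noteq> \<one>\<close> by simp
    moreover have "\<forall>q\<in>Q. \<forall>p\<in>P. q \<otimes> p = p \<otimes> q" using commute by auto
    ultimately show ?thesis
      using acentral_absorbs_commuting_pair[OF acentral Q P _ _ _ \<open>infinite P\<close>] pq(2) qA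
      by blast
  next
    case False
    then show ?thesis
      using acentral_absorbs_commuting_pair[OF acentral P Q commute _ _ \<open>infinite Q\<close>] pq(1) pA
      by blast
  qed
  then show ?thesis
    unfolding set_mult_def using subgroup.m_closed[OF A] by blast
qed

lemma hom_DirProd_split:
  assumes "\<phi> \<in> hom (G1 \<times>\<times> G2) G" and "group G1" and "group G2"
    and "x \<in> carrier G1" and "y \<in> carrier G2"
  shows "\<phi> (x, y) = \<phi> (x, \<one>\<^bsub>G2\<^esub>) \<otimes>\<^bsub>G\<^esub> \<phi> (\<one>\<^bsub>G1\<^esub>, y)"
    and "\<phi> (x, y) = \<phi> (\<one>\<^bsub>G1\<^esub>, y) \<otimes>\<^bsub>G\<^esub> \<phi> (x, \<one>\<^bsub>G2\<^esub>)"
proof -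
  interpret G1: group G1 by fact
  interpret G2: group G2 by fact
  have mult: "\<phi> (x \<otimes>\<^bsub>G1\<^esub> x', y \<otimes>\<^bsub>G2\<^esub> y') = \<phi> (x, y) \<otimes>\<^bsub>G\<^esub> \<phi> (x', y')"
    if "x \<in> carrier G1" "y \<in> carrier G2" "x' \<in> carrier G1" "y' \<in> carrier G2" for x y x' y'
    using assms(1) that by (simp add: hom_def)
  show "\<phi> (x, y) = \<phi> (x, \<one>\<^bsub>G2\<^esub>) \<otimes>\<^bsub>G\<^esub> \<phi> (\<one>\<^bsub>G1\<^esub>, y)"
    using mult[of x "\<one>\<^bsub>G2\<^esub>" "\<one>\<^bsub>G1\<^esub>" y] assms(4,5) by simp
  show "\<phi> (x, y) = \<phi> (\<one>\<^bsub>G1\<^esub>, y) \<otimes>\<^bsub>G\<^esub> \<phi> (x, \<one>\<^bsub>G2\<^esub>)"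
    using mult[of "\<one>\<^bsub>G1\<^esub>" y x "\<one>\<^bsub>G2\<^esub>"] assms(4,5) by simp
qed

lemma hom_DirProd_image_eq_set_mult:
  assumes "\<phi> \<in> hom (G1 \<times>\<times> G2) G" and "group G1" and "group G2"
  shows "\<phi> ` carrier (G1 \<times>\<times> G2) =
    ((\<lambda>x. \<phi> (x, \<one>\<^bsub>G2\<^esub>)) ` carrier G1) <#>\<^bsub>G\<^esub> ((\<lambda>y. \<phi> (\<one>\<^bsub>G1\<^esub>, y)) ` carrier G2)"
proof -
  have "\<phi> (x, y) \<in> (\<Union>x'\<in>carrier G1. \<Union>y'\<in>carrier G2. {\<phi> (x', \<one>\<^bsub>G2\<^esub>) \<otimes>\<^bsub>G\<^esub> \<phi> (\<one>\<^bsub>G1\<^esub>, y')})"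
    if "x \<in> carrier G1" "y \<in> carrier G2" for x y
    using hom_DirProd_split(1)[OF assms that] that by blast
  moreover have "\<phi> (x, \<one>\<^bsub>G2\<^esub>) \<otimes>\<^bsub>G\<^esub> \<phi> (\<one>\<^bsub>G1\<^esub>, y) \<in> \<phi> ` carrier (G1 \<times>\<times> G2)"
    if "x \<in> carrier G1" "y \<in> carrier G2" for x y
    using hom_DirProd_split(1)[OF assms that, symmetric] that by simp
  ultimately show ?thesis unfolding set_mult_def by auto
qed

lemma (in group) acentral_commuting_product_finite_factor:
  assumes "acentral G A" and "infinite A" and "infinite (rcosets A)"
    and "P \<subseteq> carrier G" and "Q \<subseteq> carrier G" and "\<forall>p\<in>P. \<forall>q\<in>Q. p \<otimes> q = q \<otimes> p"
    and PQ: "subgroup (P <#> Q) G" and "finite (rcosets (P <#> Q))"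
  shows "finite P \<or> finite Q"
proof (rule ccontr)
  assume "\<not> (finite P \<or> finite Q)"
  have A: "subgroup A G" using \<open>acentral G A\<close> unfolding acentral_def by blast
  obtain a where "a \<in> A \<inter> (P <#> Q)" "a \<noteq> \<one>"
    using infinite_Int_finite_index[OF PQ A \<open>finite (rcosets (P <#> Q))\<close> \<open>infinite A\<close>]
      infinite_imp_nonempty[of "A \<inter> (P <#> Q) - {\<one>}"] by auto
  then have "P <#> Q \<subseteq> A"
    using acentral_contains_commuting_product assms \<open>\<not> (finite P \<or> finite Q)\<close> by blast
  then show False
    using finite_index_mono[OF PQ A] \<open>finite (rcosets (P <#> Q))\<close> \<open>infinite (rcosets A)\<close> by blast
qed

theorem proposition3p2:
  fixes G :: "('a, 'm) monoid_scheme" and A :: "'a set"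
  assumes "group G"
    and "finitely_generated_group G"
    and "acentral G A"
    and "infinite A"
    and "infinite (rcosets\<^bsub>G\<^esub> A)"
  shows "not_presentable_by_product TYPE('b) TYPE('c) G"
  unfolding not_presentable_by_product_def
proof (intro conjI allI impI)
  interpret group G by fact
  show "infinite (carrier G)"
    using \<open>acentral G A\<close> \<open>infinite A\<close> subgroup.subset finite_subset unfolding acentral_def by metis
  fix G1 :: "'b monoid" and G2 :: "'c monoid" and \<phi>
  assume "group G1" "group G2" and \<phi>: "\<phi> \<in> hom (G1 \<times>\<times> G2) G"
    and "finite (rcosets\<^bsub>G\<^esub> (\<phi> ` carrier (G1 \<times>\<times> G2)))"
  define P where "P = (\<lambda>x. \<phi> (x, \<one>\<^bsub>G2\<^esub>)) ` carrier G1"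
  define Q where "Q = (\<lambda>y. \<phi> (\<one>\<^bsub>G1\<^esub>, y)) ` carrier G2"
  have image: "\<phi> ` carrier (G1 \<times>\<times> G2) = P <#>\<^bsub>G\<^esub> Q"
    unfolding P_def Q_def using hom_DirProd_image_eq_set_mult[OF \<phi> \<open>group G1\<close> \<open>group G2\<close>] .
  have "subgroup (\<phi> ` carrier (G1 \<times>\<times> G2)) G"
    using \<phi> \<open>group G1\<close> \<open>group G2\<close> DirProd_group group_axioms
    by (intro group_hom.img_is_subgroup) (simp add: group_hom_def group_hom_axioms_def)
  moreover have "P \<subseteq> carrier G" "Q \<subseteq> carrier G"
    using \<phi> \<open>group G1\<close> \<open>group G2\<close> unfolding P_def Q_def by (auto simp: hom_def Pi_def group.is_monoid)
  moreover have "\<forall>p\<in>P. \<forall>q\<in>Q. p \<otimes>\<^bsub>G\<^esub> q = q \<otimes>\<^bsub>G\<^esub> p"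
    unfolding P_def Q_def using hom_DirProd_split[OF \<phi> \<open>group G1\<close> \<open>group G2\<close>] by auto
  ultimately show "finite P \<or> finite Q"
    using acentral_commuting_product_finite_factor assms(3-5)
      \<open>finite (rcosets\<^bsub>G\<^esub> (\<phi> ` carrier (G1 \<times>\<times> G2)))\<close> image by simp
qed

end
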